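(* Let $\alpha_1,\alpha_2\ge 0$ with $\alpha_1+\alpha_2=1$, $T>0$, $V\ge 0$. For problem (P1) below, the optimal UAV trajectory $x^*$ satisfies $x^*(t)\in[-D/2,D/2]$ for all $t\in[0,T]$, i.e. the UAV stays above the line segment between the two ground users. Problem (P1): maximize $r$ over $(r,r_1,r_2,x,p_1,p_2)$ subject to $r_k\ge\alpha_k r$ for $k=1,2$; $(r_1,r_2)\in\mathcal{C}(x,p)$; $p_1(t)+p_2(t)\le\bar P$ and $p_k(t)\ge 0$ for all $t\in[0,T]$; $|\dot x(t)|\le V$ for all $t\in[0,T]$.
   Context: Fix $D>0$, $H>0$, $\beta_0>0$, $\bar P>0$. Ground users GU 1, GU 2 are at horizontal positions $x_1=-D/2$, $x_2=D/2$; for UAV position $x\in\mathbb{R}$ (constant altitude $H$), $h_k(x)=\beta_0/((x-x_k)^2+H^2)$. A trajectory is a function $x:[0,T]\to\mathbb{R}$ ($V$-Lipschitz under the speed constraint), and a power allocation is a pair of measurable functions $p_1,p_2:[0,T]\to[0,\infty)$. $\mathcal{C}(x,p)$ is the set of $(r_1,r_2)$, $r_1,r_2\ge0$, with $r_1\le\frac1T\int_0^T\log_2(1+p_1(t)h_1(x(t)))dt$, $r_2\le\frac1T\int_0^T\log_2(1+p_2(t)h_2(x(t)))dt$, $r_1+r_2\le\frac1T\int_0^T\log_2(1+p_1(t)h_1(x(t))+p_2(t)h_2(x(t)))dt$. *)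

theory Defs
  imports "HOL-Analysis.Analysis"
begin

definition gu_pos :: "real \<Rightarrow> nat \<Rightarrow> real" where
  "gu_pos D k = (if k = 1 then - D / 2 else D / 2)"

definition chan_gain :: "real \<Rightarrow> real \<Rightarrow> real \<Rightarrow> nat \<Rightarrow> real \<Rightarrow> real" where
  "chan_gain D H \<beta>0 k x = \<beta>0 / ((x - gu_pos D k)\<^sup>2 + H\<^sup>2)"

definition cap_region ::
  "real \<Rightarrow> real \<Rightarrow> real \<Rightarrow> real \<Rightarrow> (real \<Rightarrow> real) \<Rightarrow> (real \<Rightarrow> real) \<Rightarrow> (real \<Rightarrow> real)
   \<Rightarrow> (real \<times> real) set" where
  "cap_region T D H \<beta>0 x p1 p2 =
     {(r1, r2). r1 \<ge> 0 \<and> r2 \<ge> 0 \<and>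
        r1 \<le> (1 / T) * (LINT t:{0..T}|lborel. log 2 (1 + p1 t * chan_gain D H \<beta>0 1 (x t))) \<and>
        r2 \<le> (1 / T) * (LINT t:{0..T}|lborel. log 2 (1 + p2 t * chan_gain D H \<beta>0 2 (x t))) \<and>
        r1 + r2 \<le> (1 / T) * (LINT t:{0..T}|lborel.
            log 2 (1 + p1 t * chan_gain D H \<beta>0 1 (x t) + p2 t * chan_gain D H \<beta>0 2 (x t)))}"

text \<open>Feasible points of problem (P1). The speed constraint |x'(t)| \<le> V is
  rendered as V-Lipschitz continuity of x on [0,T]; powers are Borel measurable.\<close>
definition P1_feasible ::
  "real \<Rightarrow> real \<Rightarrow> real \<Rightarrow> real \<Rightarrow> real \<Rightarrow> real \<Rightarrow> real \<Rightarrow> real \<Rightarrow>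
   real \<Rightarrow> real \<Rightarrow> real \<Rightarrow> (real \<Rightarrow> real) \<Rightarrow> (real \<Rightarrow> real) \<Rightarrow> (real \<Rightarrow> real) \<Rightarrow> bool" where
  "P1_feasible T V D H \<beta>0 Pbar \<alpha>1 \<alpha>2 r r1 r2 x p1 p2 \<longleftrightarrow>
     r1 \<ge> \<alpha>1 * r \<and> r2 \<ge> \<alpha>2 * r \<and>
     (r1, r2) \<in> cap_region T D H \<beta>0 x p1 p2 \<and>
     p1 \<in> borel_measurable lborel \<and> p2 \<in> borel_measurable lborel \<and>
     (\<forall>t\<in>{0..T}. p1 t + p2 t \<le> Pbar \<and> p1 t \<ge> 0 \<and> p2 t \<ge> 0) \<and>
     V-lipschitz_on {0..T} x"

definition P1_optimal ::
  "real \<Rightarrow> real \<Rightarrow> real \<Rightarrow> real \<Rightarrow> real \<Rightarrow> real \<Rightarrow> real \<Rightarrow> real \<Rightarrow>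
   real \<Rightarrow> real \<Rightarrow> real \<Rightarrow> (real \<Rightarrow> real) \<Rightarrow> (real \<Rightarrow> real) \<Rightarrow> (real \<Rightarrow> real) \<Rightarrow> bool" where
  "P1_optimal T V D H \<beta>0 Pbar \<alpha>1 \<alpha>2 r r1 r2 x p1 p2 \<longleftrightarrow>
     P1_feasible T V D H \<beta>0 Pbar \<alpha>1 \<alpha>2 r r1 r2 x p1 p2 \<and>
     (\<forall>r' r1' r2' x' p1' p2'. P1_feasible T V D H \<beta>0 Pbar \<alpha>1 \<alpha>2 r' r1' r2' x' p1' p2' \<longrightarrow> r' \<le> r)"

end

theory Submission
  imports Defs
begin

(* Replace the trajectory x by its projection onto [-D/2, D/2]: the projection is 1-Lipschitz,
   so the speed constraint survives, and no channel gain decreases. If x leaves the segment at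
   some time, then by Lipschitz continuity it stays a fixed distance away on a whole time
   interval, where both gains of the projected trajectory exceed the old ones by a fixed factor.
   Trading part of that factor for a small share of the equal power split on this interval
   makes all three rate bounds of the capacity region strictly larger, so r, r1 and r2 can all
   be raised, contradicting optimality. *)

lemma clamp_real: "a \<le> b \<Longrightarrow> clamp a b (y::real) = max a (min b y)"
  unfolding clamp_def Basis_real_def by (auto simp: max_def min_def)

lemma borel_measurable_clamp[measurable]:
  "clamp a b \<in> borel_measurable (borel :: 'a::euclidean_space measure)"
  by (intro borel_measurable_continuous_onI continuous_at_imp_continuous_on ballI
      clamp_continuous_at continuous_on_id)

lemma clamp_real_sq_dist_le:
  fixes a b y z :: real
  assumes "z \<in> {a..b}"
  shows "(clamp a b y - z)\<^sup>2 + (y - clamp a b y)\<^sup>2 \<le> (y - z)\<^sup>2"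
proof -
  let ?c = "clamp a b y"
  have "0 \<le> (y - ?c) * (?c - z)"
    using assms by (auto simp: clamp_real max_def min_def mult_nonneg_nonneg mult_nonpos_nonpos)
  moreover have "(y - z)\<^sup>2 = (?c - z)\<^sup>2 + (y - ?c)\<^sup>2 + 2 * ((y - ?c) * (?c - z))"
    by (simp add: power2_eq_square algebra_simps)
  ultimately show ?thesis by linarith
qed

lemma abs_diff_clamp_real_lipschitz:
  fixes a b y z :: real
  assumes "a \<le> b"
  shows "\<bar>z - clamp a b z\<bar> - \<bar>y - z\<bar> \<le> \<bar>y - clamp a b y\<bar>"
  using assms by (auto simp: clamp_real max_def min_def abs_if)

lemma lipschitz_on_clamp_real:
  fixes x :: "real \<Rightarrow> real"
  assumes "V-lipschitz_on S x"
  shows "V-lipschitz_on S (\<lambda>t. clamp a b (x t))"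
  using assms dist_clamps_le_dist_args order_trans
  unfolding lipschitz_on_def by blast

lemma chan_gain_pos: "H > 0 \<Longrightarrow> \<beta>0 > 0 \<Longrightarrow> 0 < chan_gain D H \<beta>0 k y"
  unfolding chan_gain_def by (simp add: add_nonneg_pos)

lemma chan_gain_le: "H > 0 \<Longrightarrow> \<beta>0 > 0 \<Longrightarrow> chan_gain D H \<beta>0 k y \<le> \<beta>0 / H\<^sup>2"
  unfolding chan_gain_def by (rule divide_left_mono) (auto intro!: mult_pos_pos add_nonneg_pos)

lemma chan_gain_le_clamp:
  assumes "D > 0" "H > 0" "\<beta>0 > 0" "0 \<le> \<delta>" "\<delta> \<le> \<bar>y - clamp (- D/2) (D/2) y\<bar>"
  shows "chan_gain D H \<beta>0 k y
    \<le> (D\<^sup>2 + H\<^sup>2) / (D\<^sup>2 + H\<^sup>2 + \<delta>\<^sup>2) * chan_gain D H \<beta>0 k (clamp (- D/2) (D/2) y)"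
proof -
  let ?c = "clamp (- D/2) (D/2) y" and ?z = "gu_pos D k"
  define A where "A = (?c - ?z)\<^sup>2 + H\<^sup>2"
  define A0 where "A0 = D\<^sup>2 + H\<^sup>2"
  have z: "?z \<in> {- D/2 .. D/2}" using assms(1) by (simp add: gu_pos_def)
  have A: "0 < A" unfolding A_def using assms(2) by (simp add: add_nonneg_pos)
  have "\<bar>?c - ?z\<bar> \<le> D"
    using z assms(1) by (auto simp: clamp_real max_def min_def)
  then have "A \<le> A0"
    unfolding A_def A0_def by (simp add: abs_le_square_iff[symmetric])
  have "\<delta>\<^sup>2 \<le> (y - ?c)\<^sup>2"
    using assms(4,5) by (simp add: abs_le_square_iff[symmetric])
  then have "A + \<delta>\<^sup>2 \<le> (y - ?z)\<^sup>2 + H\<^sup>2"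
    using clamp_real_sq_dist_le[OF z, of y] unfolding A_def by linarith
  moreover have "0 < A + \<delta>\<^sup>2" using A by (simp add: add_pos_nonneg)
  ultimately have "chan_gain D H \<beta>0 k y \<le> \<beta>0 / (A + \<delta>\<^sup>2)"
    unfolding chan_gain_def using assms(3)
    by (intro divide_left_mono) (auto intro!: mult_pos_pos order.strict_trans2)
  also have "\<dots> \<le> A0 / (A0 + \<delta>\<^sup>2) * (\<beta>0 / A)"
  proof -
    have "A * (A0 + \<delta>\<^sup>2) \<le> A0 * (A + \<delta>\<^sup>2)"
      using \<open>A \<le> A0\<close> by (simp add: algebra_simps mult_right_mono)
    then show ?thesis
      using A \<open>A \<le> A0\<close> assms(3) by (simp add: field_simps add_pos_nonneg mult_left_mono)
  qed
  finally show ?thesis unfolding A0_def A_def chan_gain_def by simp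
qed

lemma lipschitz_on_stays_off_interval:
  fixes x :: "real \<Rightarrow> real"
  assumes lip: "V-lipschitz_on {0..T} x" and "0 \<le> V" "0 < T"
    and t0: "t0 \<in> {0..T}" "x t0 \<notin> {c..e}" and "c \<le> e"
  obtains a b \<delta> where "0 \<le> a" "a < b" "b \<le> T" "0 < \<delta>"
    "\<forall>t\<in>{a..b}. \<delta> \<le> \<bar>x t - clamp c e (x t)\<bar>"
proof -
  define \<delta> where "\<delta> = \<bar>x t0 - clamp c e (x t0)\<bar> / 2"
  define \<eta> where "\<eta> = \<delta> / (V + 1)"
  have "clamp c e (x t0) \<in> {c..e}" using \<open>c \<le> e\<close> by (simp add: clamp_real)
  then have "0 < \<delta>" unfolding \<delta>_def using t0(2) by force
  then have "0 < \<eta>" "V * \<eta> \<le> \<delta>" unfolding \<eta>_def using \<open>0 \<le> V\<close> by (auto simp: field_simps)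
  define a where "a = max 0 (t0 - \<eta>)"
  define b where "b = min T (t0 + \<eta>)"
  have "\<delta> \<le> \<bar>x t - clamp c e (x t)\<bar>" if t: "t \<in> {a..b}" for t
  proof -
    have tT: "t \<in> {0..T}" and "\<bar>t - t0\<bar> \<le> \<eta>" using t unfolding a_def b_def by auto
    have "\<bar>x t - x t0\<bar> \<le> V * \<bar>t - t0\<bar>"
      using lipschitz_onD[OF lip tT t0(1)] by (simp add: dist_real_def)
    also have "\<dots> \<le> V * \<eta>" using \<open>\<bar>t - t0\<bar> \<le> \<eta>\<close> \<open>0 \<le> V\<close> by (simp add: mult_left_mono)
    finally have "\<bar>x t - x t0\<bar> \<le> \<delta>" using \<open>V * \<eta> \<le> \<delta>\<close> by linarith
    then show ?thesis
      using abs_diff_clamp_real_lipschitz[OF \<open>c \<le> e\<close>, of "x t0" "x t"] unfolding \<delta>_def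
      by (simp add: field_simps)
  qed
  moreover have "0 \<le> a" "a < b" "b \<le> T" unfolding a_def b_def using t0(1) \<open>0 < \<eta>\<close> \<open>0 < T\<close> by auto
  ultimately show thesis using that \<open>0 < \<delta>\<close> by blast
qed

lemma set_integrable_bounded_Icc:
  fixes f :: "real \<Rightarrow> real"
  assumes "f \<in> borel_measurable lborel" "\<forall>t\<in>{a..b}. \<bar>f t\<bar> \<le> B"
  shows "set_integrable lborel {a..b} f"
  unfolding set_integrable_def
  using assms by (intro integrableI_bounded_set_indicator[where B=B]) (auto simp: emeasure_lborel_Icc_eq)

lemma set_integral_strict_mono_interval:
  fixes f g :: "real \<Rightarrow> real"
  assumes "set_integrable lborel S f" "set_integrable lborel S g"
    and "\<forall>t\<in>S. f t \<le> g t" "\<forall>t\<in>{a..b}. f t < g t" "{a..b} \<subseteq> S" "a < b"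
  shows "(LINT t:S|lborel. f t) < (LINT t:S|lborel. g t)"
proof -
  define h where "h t = indicator S t *\<^sub>R (g t - f t)" for t
  have h: "integrable lborel h"
    using set_integral_diff(1)[OF assms(2,1)] unfolding set_integrable_def h_def .
  have h_nonneg: "AE t in lborel. 0 \<le> h t"
    using assms(3) by (auto simp: h_def indicator_def)
  have "integral\<^sup>L lborel h \<noteq> 0"
  proof
    assume "integral\<^sup>L lborel h = 0"
    then have "AE t in lborel. h t = 0"
      using integral_nonneg_eq_0_iff_AE[OF h h_nonneg] by simp
    then have "AE t in lborel. t \<notin> {a..b}"
      by eventually_elim (use assms(4,5) in \<open>fastforce simp: h_def indicator_def\<close>)
    then have "emeasure lborel {a..b} = 0"
      by (subst (asm) AE_iff_measurable[where N="{a..b}"]) auto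
    then show False using \<open>a < b\<close> by simp
  qed
  moreover have "0 \<le> integral\<^sup>L lborel h" using h_nonneg by (rule integral_nonneg_AE)
  ultimately have "0 < integral\<^sup>L lborel h" by simp
  then show ?thesis
    using set_integral_diff(2)[OF assms(2,1)] unfolding set_lebesgue_integral_def h_def by simp
qed

definition avg_rate :: "real \<Rightarrow> (real \<Rightarrow> real) \<Rightarrow> real" where
  "avg_rate T s = (1 / T) * (LINT t:{0..T}|lborel. log 2 (1 + s t))"

lemma avg_rate_strict_mono:
  fixes u v :: "real \<Rightarrow> real"
  assumes "0 < T" "0 \<le> a" "a < b" "b \<le> T"
    and [measurable]: "u \<in> borel_measurable lborel" "v \<in> borel_measurable lborel"
    and "\<forall>t\<in>{0..T}. 0 \<le> u t \<and> u t \<le> v t \<and> v t \<le> M" "\<forall>t\<in>{a..b}. u t < v t"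
  shows "avg_rate T u < avg_rate T v"
proof -
  have int: "set_integrable lborel {0..T} (\<lambda>t. log 2 (1 + w t))"
    if [measurable]: "w \<in> borel_measurable lborel" and w: "\<forall>t\<in>{0..T}. 0 \<le> w t \<and> w t \<le> M" for w
    by (rule set_integrable_bounded_Icc[where B="log 2 (1 + M)"]) (use w in auto)
  have "(LINT t:{0..T}|lborel. log 2 (1 + u t)) < (LINT t:{0..T}|lborel. log 2 (1 + v t))"
  proof (rule set_integral_strict_mono_interval[where a=a and b=b])
    show "set_integrable lborel {0..T} (\<lambda>t. log 2 (1 + u t))"
      using assms(7) by (intro int) force+
    show "set_integrable lborel {0..T} (\<lambda>t. log 2 (1 + v t))"
      using assms(7) by (intro int) (fastforce intro: order_trans)+
    show "\<forall>t\<in>{0..T}. log 2 (1 + u t) \<le> log 2 (1 + v t)"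
      using assms(7) by auto
    show "\<forall>t\<in>{a..b}. log 2 (1 + u t) < log 2 (1 + v t)"
    proof
      fix t assume "t \<in> {a..b}"
      then have "0 \<le> u t" "u t < v t" using assms(2,4,7,8) by auto
      then show "log 2 (1 + u t) < log 2 (1 + v t)" by simp
    qed
  qed (use assms(2-4) in auto)
  then show ?thesis unfolding avg_rate_def using \<open>0 < T\<close> by (simp add: divide_strict_right_mono)
qed

lemma avg_rate_add_strict_mono:
  fixes u1 u2 v1 v2 :: "real \<Rightarrow> real"
  assumes "0 < T" "0 \<le> a" "a < b" "b \<le> T"
    and [measurable]: "u1 \<in> borel_measurable lborel" "v1 \<in> borel_measurable lborel"
      "u2 \<in> borel_measurable lborel" "v2 \<in> borel_measurable lborel"
    and "\<forall>t\<in>{0..T}. 0 \<le> u1 t \<and> u1 t \<le> v1 t \<and> v1 t \<le> M" "\<forall>t\<in>{a..b}. u1 t < v1 t"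
    and "\<forall>t\<in>{0..T}. 0 \<le> u2 t \<and> u2 t \<le> v2 t \<and> v2 t \<le> M" "\<forall>t\<in>{a..b}. u2 t < v2 t"
  shows "avg_rate T (\<lambda>t. u1 t + u2 t) < avg_rate T (\<lambda>t. v1 t + v2 t)"
proof (rule avg_rate_strict_mono[where M = "2 * M", OF assms(1-4)])
  show "\<forall>t\<in>{0..T}. 0 \<le> u1 t + u2 t \<and> u1 t + u2 t \<le> v1 t + v2 t \<and> v1 t + v2 t \<le> 2 * M"
    using assms(9,11) by (smt (verit))
  show "\<forall>t\<in>{a..b}. u1 t + u2 t < v1 t + v2 t"
    using assms(10,12) by (smt (verit))
qed measurable

lemma cap_region_avg_rate:
  "cap_region T D H \<beta>0 x p1 p2 =
     {(r1, r2). 0 \<le> r1 \<and> 0 \<le> r2 \<and>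
        r1 \<le> avg_rate T (\<lambda>t. p1 t * chan_gain D H \<beta>0 1 (x t)) \<and>
        r2 \<le> avg_rate T (\<lambda>t. p2 t * chan_gain D H \<beta>0 2 (x t)) \<and>
        r1 + r2 \<le> avg_rate T (\<lambda>t. p1 t * chan_gain D H \<beta>0 1 (x t) + p2 t * chan_gain D H \<beta>0 2 (x t))}"
  unfolding cap_region_def avg_rate_def by (simp add: add.assoc)

lemma avg_rate_cong[cong]:
  "T = T' \<Longrightarrow> (\<And>t. t \<in> {0..T'} =simp=> s t = s' t) \<Longrightarrow> avg_rate T s = avg_rate T' s'"
  unfolding avg_rate_def simp_implies_def by (auto intro: set_lebesgue_integral_cong)

lemma P1_feasible_cong_traj:
  assumes "\<forall>t\<in>{0..T}. x t = y t"
  shows "P1_feasible T V D H \<beta>0 Pbar \<alpha>1 \<alpha>2 r r1 r2 x p1 p2 \<longleftrightarrow>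
    P1_feasible T V D H \<beta>0 Pbar \<alpha>1 \<alpha>2 r r1 r2 y p1 p2"
proof -
  have "V-lipschitz_on {0..T} x \<longleftrightarrow> V-lipschitz_on {0..T} y"
    using assms unfolding lipschitz_on_def by auto
  then show ?thesis
    unfolding P1_feasible_def cap_region_avg_rate using assms by simp
qed

lemma P1_feasible_increase:
  assumes feas: "P1_feasible T V D H \<beta>0 Pbar \<alpha>1 \<alpha>2 r r1 r2 x p1 p2"
    and \<alpha>: "0 \<le> \<alpha>1" "0 \<le> \<alpha>2" "\<alpha>1 + \<alpha>2 = 1"
    and q: "q1 \<in> borel_measurable lborel" "q2 \<in> borel_measurable lborel"
      "\<forall>t\<in>{0..T}. q1 t + q2 t \<le> Pbar \<and> 0 \<le> q1 t \<and> 0 \<le> q2 t"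
    and lip: "V-lipschitz_on {0..T} y"
    and rate1: "avg_rate T (\<lambda>t. p1 t * chan_gain D H \<beta>0 1 (x t))
      < avg_rate T (\<lambda>t. q1 t * chan_gain D H \<beta>0 1 (y t))" (is "?R1 < ?S1")
    and rate2: "avg_rate T (\<lambda>t. p2 t * chan_gain D H \<beta>0 2 (x t))
      < avg_rate T (\<lambda>t. q2 t * chan_gain D H \<beta>0 2 (y t))" (is "?R2 < ?S2")
    and rate12: "avg_rate T (\<lambda>t. p1 t * chan_gain D H \<beta>0 1 (x t) + p2 t * chan_gain D H \<beta>0 2 (x t))
      < avg_rate T (\<lambda>t. q1 t * chan_gain D H \<beta>0 1 (y t) + q2 t * chan_gain D H \<beta>0 2 (y t))"
      (is "?R12 < ?S12")
  obtains d where "0 < d" "P1_feasible T V D H \<beta>0 Pbar \<alpha>1 \<alpha>2 (r + d) (r1 + d) (r2 + d) y q1 q2"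
proof -
  have r: "0 \<le> r1" "0 \<le> r2" "r1 \<le> ?R1" "r2 \<le> ?R2" "r1 + r2 \<le> ?R12" "\<alpha>1 * r \<le> r1" "\<alpha>2 * r \<le> r2"
    using feas unfolding P1_feasible_def cap_region_avg_rate by auto
  define d where "d = min (min (?S1 - r1) (?S2 - r2)) ((?S12 - (r1 + r2)) / 2)"
  have "0 < d" "d \<le> ?S1 - r1" "d \<le> ?S2 - r2" "2 * d \<le> ?S12 - (r1 + r2)"
    unfolding d_def using r rate1 rate2 rate12 by (auto simp: min_def)
  moreover have "\<alpha>1 * (r + d) \<le> r1 + d" "\<alpha>2 * (r + d) \<le> r2 + d"
    using r \<alpha> \<open>0 < d\<close> by (auto simp: distrib_left intro!: add_mono mult_left_le_one_le)
  ultimately have "P1_feasible T V D H \<beta>0 Pbar \<alpha>1 \<alpha>2 (r + d) (r1 + d) (r2 + d) y q1 q2"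
    unfolding P1_feasible_def cap_region_avg_rate using r q lip by auto
  with \<open>0 < d\<close> show thesis by (rule that)
qed

text \<open>Mixing in the equal split P/2 makes both users' powers positive on I, which each
  individual rate bound needs in order to increase strictly.\<close>
definition power_mix :: "real \<Rightarrow> real \<Rightarrow> real set \<Rightarrow> (real \<Rightarrow> real) \<Rightarrow> real \<Rightarrow> real" where
  "power_mix \<epsilon> P I p t = (if t \<in> I then (1 - \<epsilon>) * p t + \<epsilon> * (P / 2) else p t)"

lemma borel_measurable_power_mix[measurable]:
  assumes [measurable]: "p \<in> borel_measurable lborel" "I \<in> sets lborel"
  shows "power_mix \<epsilon> P I p \<in> borel_measurable lborel"
  unfolding power_mix_def by measurable

lemma power_mix_feasible:
  assumes "0 \<le> \<epsilon>" "\<epsilon> \<le> 1" "p1 t + p2 t \<le> P" "0 \<le> p1 t" "0 \<le> p2 t"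
  shows "power_mix \<epsilon> P I p1 t + power_mix \<epsilon> P I p2 t \<le> P"
    and "0 \<le> power_mix \<epsilon> P I p1 t" "0 \<le> power_mix \<epsilon> P I p2 t"
proof -
  have "(1 - \<epsilon>) * (p1 t + p2 t) \<le> (1 - \<epsilon>) * P"
    using assms by (intro mult_left_mono) auto
  then show "power_mix \<epsilon> P I p1 t + power_mix \<epsilon> P I p2 t \<le> P"
    using assms unfolding power_mix_def by (auto simp: algebra_simps)
  show "0 \<le> power_mix \<epsilon> P I p1 t" "0 \<le> power_mix \<epsilon> P I p2 t"
    using assms unfolding power_mix_def by auto
qed

lemma snr_bounds:
  assumes "0 < H" "0 < \<beta>0" "0 \<le> p" "p \<le> P"
  shows "0 \<le> p * chan_gain D H \<beta>0 k y" "p * chan_gain D H \<beta>0 k y \<le> P * (\<beta>0 / H\<^sup>2)"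
  using assms less_imp_le[OF chan_gain_pos[OF assms(1,2)]] chan_gain_le[OF assms(1,2)]
  by (auto intro!: mult_mono simp del: times_divide_eq_right)

lemma clamp_power_mix_snr:
  fixes x p :: "real \<Rightarrow> real" and k :: nat
  assumes "0 < D" "0 < H" "0 < \<beta>0" "0 < P" "0 < \<delta>"
    and p: "\<forall>t\<in>{0..T}. 0 \<le> p t \<and> p t \<le> P"
    and far: "\<forall>t\<in>I. \<delta> \<le> \<bar>x t - clamp (- D/2) (D/2) (x t)\<bar>" and I: "I \<subseteq> {0..T}"
  defines "\<epsilon> \<equiv> \<delta>\<^sup>2 / (D\<^sup>2 + H\<^sup>2 + \<delta>\<^sup>2)"
    and "g \<equiv> chan_gain D H \<beta>0 k"
  shows "\<forall>t\<in>{0..T}. 0 \<le> p t * g (x t)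
      \<and> p t * g (x t) \<le> power_mix \<epsilon> P I p t * g (clamp (- D/2) (D/2) (x t))
      \<and> power_mix \<epsilon> P I p t * g (clamp (- D/2) (D/2) (x t)) \<le> P * (\<beta>0 / H\<^sup>2)"
    and "\<forall>t\<in>I. p t * g (x t) < power_mix \<epsilon> P I p t * g (clamp (- D/2) (D/2) (x t))"
proof -
  let ?c = "clamp (- D/2) (D/2)" and ?q = "power_mix \<epsilon> P I p"
  have "0 < D\<^sup>2 + H\<^sup>2" "0 < \<delta>\<^sup>2" using \<open>0 < H\<close> \<open>0 < \<delta>\<close> by (simp_all add: add_nonneg_pos)
  then have "0 < D\<^sup>2 + H\<^sup>2 + \<delta>\<^sup>2" by linarith
  with \<open>0 < D\<^sup>2 + H\<^sup>2\<close> \<open>0 < \<delta>\<^sup>2\<close>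
  have \<epsilon>: "0 < \<epsilon>" "\<epsilon> < 1" "(D\<^sup>2 + H\<^sup>2) / (D\<^sup>2 + H\<^sup>2 + \<delta>\<^sup>2) = 1 - \<epsilon>"
    unfolding \<epsilon>_def by (simp_all add: field_simps)
  have gain: "g y \<le> g (?c y)" for y
    using chan_gain_le_clamp[OF assms(1-3), of 0] \<open>0 < H\<close> unfolding g_def
    by (simp add: add_nonneg_pos)
  have strict: "p t * g (x t) < ?q t * g (?c (x t))" if t: "t \<in> I" for t
  proof -
    have "g (x t) \<le> (1 - \<epsilon>) * g (?c (x t))"
      using chan_gain_le_clamp[OF assms(1-3), of \<delta> "x t" k] \<open>0 < \<delta>\<close> far t
      unfolding g_def \<epsilon>(3) by auto
    then have "p t * g (x t) \<le> (1 - \<epsilon>) * p t * g (?c (x t))"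
      using p t I by (auto simp: ac_simps intro: mult_left_mono)
    moreover have "0 < \<epsilon> * (P / 2) * g (?c (x t))"
      using \<epsilon> \<open>0 < P\<close> chan_gain_pos[OF assms(2,3)] unfolding g_def by simp
    ultimately show ?thesis
      using t unfolding power_mix_def by (simp add: algebra_simps)
  qed
  show "\<forall>t\<in>I. p t * g (x t) < ?q t * g (?c (x t))" using strict by blast
  show "\<forall>t\<in>{0..T}. 0 \<le> p t * g (x t) \<and> p t * g (x t) \<le> ?q t * g (?c (x t))
      \<and> ?q t * g (?c (x t)) \<le> P * (\<beta>0 / H\<^sup>2)"
  proof
    fix t assume t: "t \<in> {0..T}"
    have "p t * g (x t) \<le> ?q t * g (?c (x t))"
    proof (cases "t \<in> I")
      case True then show ?thesis using strict t by (simp add: less_imp_le)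
    next
      case False then show ?thesis using gain p t unfolding power_mix_def by (simp add: mult_left_mono)
    qed
    moreover have "0 \<le> ?q t" "?q t \<le> P"
    proof -
      have pt: "0 \<le> p t" "p t \<le> P" using p t by auto
      then have "0 \<le> (1 - \<epsilon>) * p t" "(1 - \<epsilon>) * p t \<le> (1 - \<epsilon>) * P"
        using \<epsilon> by (auto intro: mult_left_mono)
      moreover have "0 \<le> \<epsilon> * (P / 2)" "(1 - \<epsilon>) * P + \<epsilon> * (P / 2) \<le> P"
        using \<epsilon> \<open>0 < P\<close> by (auto simp: algebra_simps)
      ultimately show "0 \<le> ?q t" "?q t \<le> P"
        using pt unfolding power_mix_def by auto
    qed
    ultimately show "0 \<le> p t * g (x t) \<and> p t * g (x t) \<le> ?q t * g (?c (x t))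
      \<and> ?q t * g (?c (x t)) \<le> P * (\<beta>0 / H\<^sup>2)"
      using snr_bounds(1)[OF assms(2,3), where p = "p t" and P = P]
        snr_bounds(2)[OF assms(2,3), where p = "?q t" and P = P] p t
      unfolding g_def by auto
  qed
qed

lemma P1_feasible_clamp_improve:
  fixes x :: "real \<Rightarrow> real"
  assumes pos: "0 < D" "0 < H" "0 < \<beta>0" "0 < Pbar" and "0 < T" "0 \<le> V"
    and \<alpha>: "0 \<le> \<alpha>1" "0 \<le> \<alpha>2" "\<alpha>1 + \<alpha>2 = 1"
    and [measurable]: "x \<in> borel_measurable borel"
    and feas: "P1_feasible T V D H \<beta>0 Pbar \<alpha>1 \<alpha>2 r r1 r2 x p1 p2"
    and t0: "t0 \<in> {0..T}" "x t0 \<notin> {- D/2 .. D/2}"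
  obtains d q1 q2 where "0 < d"
    "P1_feasible T V D H \<beta>0 Pbar \<alpha>1 \<alpha>2 (r + d) (r1 + d) (r2 + d) (\<lambda>t. clamp (- D/2) (D/2) (x t)) q1 q2"
proof -
  let ?c = "clamp (- D/2) (D/2)" and ?g = "chan_gain D H \<beta>0"
  have [measurable]: "p1 \<in> borel_measurable lborel" "p2 \<in> borel_measurable lborel"
    and power: "\<forall>t\<in>{0..T}. p1 t + p2 t \<le> Pbar \<and> 0 \<le> p1 t \<and> 0 \<le> p2 t"
    and lip: "V-lipschitz_on {0..T} x"
    using feas unfolding P1_feasible_def by auto
  have "- D/2 \<le> D/2" using \<open>0 < D\<close> by simp
  then obtain a b \<delta> where ab: "0 \<le> a" "a < b" "b \<le> T" and "0 < \<delta>"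
    and far: "\<forall>t\<in>{a..b}. \<delta> \<le> \<bar>x t - ?c (x t)\<bar>"
    by (rule lipschitz_on_stays_off_interval[OF lip \<open>0 \<le> V\<close> \<open>0 < T\<close> t0])
  define \<epsilon> where "\<epsilon> = \<delta>\<^sup>2 / (D\<^sup>2 + H\<^sup>2 + \<delta>\<^sup>2)"
  define q1 where "q1 = power_mix \<epsilon> Pbar {a..b} p1"
  define q2 where "q2 = power_mix \<epsilon> Pbar {a..b} p2"
  have q_meas[measurable]: "q1 \<in> borel_measurable lborel" "q2 \<in> borel_measurable lborel"
    unfolding q1_def q2_def by measurable
  have "0 < D\<^sup>2 + H\<^sup>2 + \<delta>\<^sup>2" using \<open>0 < H\<close> by (intro add_pos_nonneg add_nonneg_pos) auto
  then have \<epsilon>: "0 \<le> \<epsilon>" "\<epsilon> \<le> 1"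
    unfolding \<epsilon>_def by simp_all
  have q_power: "\<forall>t\<in>{0..T}. q1 t + q2 t \<le> Pbar \<and> 0 \<le> q1 t \<and> 0 \<le> q2 t"
    unfolding q1_def q2_def
    by (intro ballI conjI power_mix_feasible[OF \<epsilon>]) (use power in auto)
  have p_bounds: "\<forall>t\<in>{0..T}. 0 \<le> p1 t \<and> p1 t \<le> Pbar" "\<forall>t\<in>{0..T}. 0 \<le> p2 t \<and> p2 t \<le> Pbar"
    using power by force+
  have window: "{a..b} \<subseteq> {0..T}" using ab by auto
  note snr1 = clamp_power_mix_snr[OF pos \<open>0 < \<delta>\<close> p_bounds(1) far window, where k = 1,
      folded \<epsilon>_def q1_def]
  note snr2 = clamp_power_mix_snr[OF pos \<open>0 < \<delta>\<close> p_bounds(2) far window, where k = 2,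
      folded \<epsilon>_def q2_def]
  note rate_mono = avg_rate_strict_mono[OF \<open>0 < T\<close> ab]
  have rate1: "avg_rate T (\<lambda>t. p1 t * ?g 1 (x t)) < avg_rate T (\<lambda>t. q1 t * ?g 1 (?c (x t)))"
    by (rule rate_mono[OF _ _ snr1]; unfold chan_gain_def; measurable)
  have rate2: "avg_rate T (\<lambda>t. p2 t * ?g 2 (x t)) < avg_rate T (\<lambda>t. q2 t * ?g 2 (?c (x t)))"
    by (rule rate_mono[OF _ _ snr2]; unfold chan_gain_def; measurable)
  have rate12: "avg_rate T (\<lambda>t. p1 t * ?g 1 (x t) + p2 t * ?g 2 (x t))
      < avg_rate T (\<lambda>t. q1 t * ?g 1 (?c (x t)) + q2 t * ?g 2 (?c (x t)))"
    by (rule avg_rate_add_strict_mono[OF \<open>0 < T\<close> ab _ _ _ _ snr1 snr2]; unfold chan_gain_def; measurable)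
  obtain d where "0 < d"
    "P1_feasible T V D H \<beta>0 Pbar \<alpha>1 \<alpha>2 (r + d) (r1 + d) (r2 + d) (\<lambda>t. ?c (x t)) q1 q2"
    by (rule P1_feasible_increase[OF feas \<alpha> q_meas q_power lipschitz_on_clamp_real[OF lip]
          rate1 rate2 rate12])
  then show thesis by (rule that)
qed

theorem lemma2:
  fixes D H \<beta>0 Pbar \<alpha>1 \<alpha>2 T V r r1 r2 :: real
    and x p1 p2 :: "real \<Rightarrow> real"
  assumes "D > 0" "H > 0" "\<beta>0 > 0" "Pbar > 0"
    and "\<alpha>1 \<ge> 0" "\<alpha>2 \<ge> 0" "\<alpha>1 + \<alpha>2 = 1"
    and "T > 0" "V \<ge> 0"
    and "P1_optimal T V D H \<beta>0 Pbar \<alpha>1 \<alpha>2 r r1 r2 x p1 p2"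
  shows "\<forall>t\<in>{0..T}. x t \<in> {- D / 2 .. D / 2}"
proof (rule ccontr)
  assume "\<not> ?thesis"
  then obtain t0 where t0: "t0 \<in> {0..T}" "x t0 \<notin> {- D/2 .. D/2}" by auto
  have feas: "P1_feasible T V D H \<beta>0 Pbar \<alpha>1 \<alpha>2 r r1 r2 x p1 p2"
    and opt: "\<And>r' r1' r2' x' p1' p2'.
      P1_feasible T V D H \<beta>0 Pbar \<alpha>1 \<alpha>2 r' r1' r2' x' p1' p2' \<Longrightarrow> r' \<le> r"
    using assms(10) unfolding P1_optimal_def by blast+
  define X where "X t = x (clamp 0 T t)" for t
  have X_eq: "\<forall>t\<in>{0..T}. X t = x t" unfolding X_def by simp
  have "continuous_on {0..T} x"
    using feas unfolding P1_feasible_def by (auto intro: lipschitz_on_continuous_on)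
  then have X_meas: "X \<in> borel_measurable borel"
    unfolding X_def by (intro borel_measurable_continuous_onI clamp_continuous_on) auto
  have feas_X: "P1_feasible T V D H \<beta>0 Pbar \<alpha>1 \<alpha>2 r r1 r2 X p1 p2"
    using feas P1_feasible_cong_traj[OF X_eq] by simp
  have "X t0 \<notin> {- D/2 .. D/2}" using t0 X_eq by auto
  then obtain d q1 q2 where "0 < d"
    "P1_feasible T V D H \<beta>0 Pbar \<alpha>1 \<alpha>2 (r + d) (r1 + d) (r2 + d) (\<lambda>t. clamp (- D/2) (D/2) (X t)) q1 q2"
    by (rule P1_feasible_clamp_improve[OF assms(1-4,8,9,5-7) X_meas feas_X t0(1)])
  then show False using opt by force
qed

end
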